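(* Let $a<b$, $\lambda>0$, let $H:\mathbb{R}\to\mathbb{R}$, $H(y):=\tfrac12\left(\tfrac12 y^2-\lambda\right)^2$, let $\theta\in C[a,b]$ with $\min_{x\in[a,b]}\theta(x)>0$, and let $F\in C^1[a,b]$ with $F(a)=F(b)=0$, $F(x)\neq 0$ for $x\in(a,b)$ and $\|F\|_\infty<(2\lambda/3)^{3/2}$. Let $X:=C_0[a,b]:=\{v\in C[a,b]\mid v(a)=v(b)=0\}$ be endowed with the norm $\|\cdot\|_p$ for some $p\in[1,\infty]$, and define $$K:X\to\mathbb{R},\qquad K(v):=\int_a^b\theta\cdot\big(H\circ v-Fv\big).$$ Then $K$ is Gâteaux differentiable (at every point of $X$); moreover, for $v\in X$, $K$ is Fréchet differentiable at $v$ if and only if $p\geq 4$.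
   Context: $\|\cdot\|_p$ denotes the $L^p(a,b)$-norm restricted to $X$ (for $p=\infty$ the supremum norm). Integrals are Riemann integrals over $[a,b]$. *)

theory Defs
  imports "HOL-Analysis.Analysis" "HOL-Library.Extended_Real"
begin

definition Hfun :: "real \<Rightarrow> real \<Rightarrow> real" where
  "Hfun lam y = (1/2) * ((1/2) * y ^ 2 - lam) ^ 2"

text \<open>The space C_0[a,b]; functions are represented as real-valued functions on the
  real line that vanish outside [a,b] (so that the representation is unique).\<close>
definition C0 :: "real \<Rightarrow> real \<Rightarrow> (real \<Rightarrow> real) set" where
  "C0 a b = {v. continuous_on {a..b} v \<and> v a = 0 \<and> v b = 0 \<and> (\<forall>x. x \<notin> {a..b} \<longrightarrow> v x = 0)}"

definition Lp_norm :: "ereal \<Rightarrow> real \<Rightarrow> real \<Rightarrow> (real \<Rightarrow> real) \<Rightarrow> real" where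
  "Lp_norm p a b v =
     (if p = \<infinity> then (SUP x\<in>{a..b}. \<bar>v x\<bar>)
      else (integral {a..b} (\<lambda>x. \<bar>v x\<bar> powr real_of_ereal p)) powr (1 / real_of_ereal p))"

definition bdd_linear_fun :: "(real \<Rightarrow> real) set \<Rightarrow> ((real \<Rightarrow> real) \<Rightarrow> real) \<Rightarrow> ((real \<Rightarrow> real) \<Rightarrow> real) \<Rightarrow> bool" where
  "bdd_linear_fun X N L \<longleftrightarrow>
     (\<forall>u\<in>X. \<forall>w\<in>X. L (\<lambda>x. u x + w x) = L u + L w) \<and>
     (\<forall>c. \<forall>u\<in>X. L (\<lambda>x. c * u x) = c * L u) \<and>
     (\<exists>C. \<forall>u\<in>X. \<bar>L u\<bar> \<le> C * N u)"

definition gateaux_differentiable :: "(real \<Rightarrow> real) set \<Rightarrow> ((real \<Rightarrow> real) \<Rightarrow> real) \<Rightarrow> ((real \<Rightarrow> real) \<Rightarrow> real) \<Rightarrow> (real \<Rightarrow> real) \<Rightarrow> bool" where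
  "gateaux_differentiable X N K v \<longleftrightarrow>
     (\<exists>L. bdd_linear_fun X N L \<and>
        (\<forall>h\<in>X. ((\<lambda>t. (K (\<lambda>x. v x + t * h x) - K v) / t) \<longlongrightarrow> L h) (at 0)))"

definition frechet_differentiable :: "(real \<Rightarrow> real) set \<Rightarrow> ((real \<Rightarrow> real) \<Rightarrow> real) \<Rightarrow> ((real \<Rightarrow> real) \<Rightarrow> real) \<Rightarrow> (real \<Rightarrow> real) \<Rightarrow> bool" where
  "frechet_differentiable X N K v \<longleftrightarrow>
     (\<exists>L. bdd_linear_fun X N L \<and>
        (\<forall>\<epsilon>>0. \<exists>\<delta>>0. \<forall>h\<in>X. N h < \<delta> \<longrightarrow>
            \<bar>K (\<lambda>x. v x + h x) - K v - L h\<bar> \<le> \<epsilon> * N h))"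

end

theory Submission
  imports Defs
begin

text \<open>
  \<open>K (v + h) - K v\<close> is a polynomial of degree four in \<open>h\<close>: its linear part is the first
  variation \<open>\<integral> \<theta> (H' v - F) h\<close>, and the remainder is bounded by \<open>\<integral> \<bar>h\<bar> ^ k\<close>, \<open>k = 2, 3, 4\<close>,
  with coefficients controlled by continuity. This gives the Gateaux derivative for every
  \<open>p\<close>, and for \<open>p \<ge> 4\<close> the power-mean inequality \<open>\<integral> \<bar>h\<bar> ^ k \<le> C \<parallel>h\<parallel>\<^sub>p ^ k\<close> makes the
  remainder \<open>O(\<parallel>h\<parallel>\<^sub>p ^ 2)\<close>, so the derivative is Frechet.

  For \<open>p < 4\<close> a Frechet derivative would force the symmetric second difference
  \<open>K (v + h) + K (v - h) - 2 K v\<close> to be \<open>o(\<parallel>h\<parallel>\<^sub>p)\<close>. That difference is at least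
  \<open>\<integral> \<theta> h ^ 4 / 4 - M \<integral> h ^ 2\<close>. For a tent \<open>h\<close> of height \<open>s powr -\<alpha>\<close> and half-width \<open>s\<close>
  the quartic term is of order \<open>s powr (1 - 4 \<alpha>)\<close> and \<open>\<parallel>h\<parallel>\<^sub>p\<close> of order \<open>s powr (1/p - \<alpha>)\<close>;
  for suitable \<open>\<alpha>\<close> the latter tends to 0 while the former dominates it as \<open>s \<rightarrow> 0\<close>.
\<close>

lemma Young_powr_bound:
  fixes y m q :: real
  assumes "y \<ge> 0" "m > 0" "q \<ge> 1"
  shows "y \<le> (1 - 1/q) * m + y powr q * m powr (1 - q) / q"
proof (cases "y = 0")
  case True
  with assms show ?thesis by simp
next
  case False
  with assms have y: "y > 0" by simp
  have "((y/m) powr q) powr (1/q) * 1 powr (1 - 1/q) \<le> (1/q) * (y/m) powr q + (1 - 1/q) * 1"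
    by (rule Youngs_inequality_0) (use assms y in auto)
  then have "y/m \<le> (1/q) * (y/m) powr q + (1 - 1/q)"
    using assms y by (simp add: powr_powr)
  then have "y \<le> m * ((1/q) * (y powr q / m powr q) + (1 - 1/q))"
    using assms y by (simp add: powr_divide divide_le_eq mult.commute)
  also have "\<dots> = (1 - 1/q) * m + y powr q * m powr (1 - q) / q"
    using assms by (simp add: powr_diff field_simps)
  finally show ?thesis .
qed

lemma integral_le_powr_mean:
  fixes g :: "real \<Rightarrow> real"
  assumes ab: "a < b" and q: "q \<ge> 1" and g: "continuous_on {a..b} g" "\<forall>x\<in>{a..b}. g x \<ge> 0"
  shows "integral {a..b} g \<le> (b - a) powr (1 - 1/q) * integral {a..b} (\<lambda>x. g x powr q) powr (1/q)"
proof -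
  define J where "J = integral {a..b} (\<lambda>x. g x powr q)"
  have gq: "continuous_on {a..b} (\<lambda>x. g x powr q)"
    using g q by (intro continuous_on_powr') (auto intro: continuous_intros)
  have J: "J \<ge> 0"
    unfolding J_def by (rule integral_nonneg) (auto intro: integrable_continuous_interval gq)
  have Young: "integral {a..b} g \<le> (1 - 1/q) * m * (b - a) + m powr (1 - q) / q * J"
    if m: "m > 0" for m
  proof -
    have "integral {a..b} g \<le> integral {a..b} (\<lambda>x. (1 - 1/q) * m + g x powr q * (m powr (1 - q) / q))"
      using Young_powr_bound[OF _ m q] g q
      by (intro integral_le integrable_continuous_interval continuous_intros gq) auto
    also have "\<dots> = (1 - 1/q) * m * (b - a) + m powr (1 - q) / q * J"
      unfolding J_def using ab q
      by (subst integral_add) (auto intro!: integrable_continuous_interval gq continuous_intros)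
    finally show ?thesis .
  qed
  show ?thesis
  proof (cases "J = 0")
    case True
    have "integral {a..b} g \<le> e" if e: "e > 0" for e
    proof -
      have "integral {a..b} g \<le> (1 - 1/q) * e"
        using Young[of "e / (b - a)"] True e ab by simp
      also have "\<dots> \<le> e"
        using e q by (simp add: mult_le_cancel_right1)
      finally show ?thesis .
    qed
    then have "integral {a..b} g \<le> 0"
      by (metis field_le_epsilon add_0)
    with True show ?thesis unfolding J_def by simp
  next
    case False
    with J have J: "J > 0" by simp
    define m where "m = (J / (b - a)) powr (1/q)"
    have m: "m > 0" "J = (b - a) * m powr q"
      unfolding m_def using J ab q by (simp_all add: powr_powr)
    have "integral {a..b} g \<le> (1 - 1/q) * m * (b - a) + m powr (1 - q) / q * J"
      using Young[OF m(1)] .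
    also have "\<dots> = m * (b - a)"
      unfolding m(2) using m(1) ab q by (simp add: powr_diff field_simps)
    also have "\<dots> = (b - a) powr (1 - 1/q) * J powr (1/q)"
      unfolding m_def using ab J by (simp add: powr_divide powr_diff)
    finally show ?thesis unfolding J_def .
  qed
qed

lemma abs_le_Lp_norm_infinity:
  assumes "continuous_on {a..b} h" "x \<in> {a..b}"
  shows "\<bar>h x\<bar> \<le> Lp_norm \<infinity> a b h"
proof -
  obtain B where "\<And>y. y \<in> {a..b} \<Longrightarrow> norm (h y) \<le> B"
    using continuous_on_compact_bound[OF compact_Icc assms(1)] by metis
  then have "bdd_above ((\<lambda>y. \<bar>h y\<bar>) ` {a..b})"
    by (auto intro!: bdd_aboveI2[where M = B])
  then show ?thesis
    unfolding Lp_norm_def using cSUP_upper[OF assms(2)] by simp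
qed

lemma Lp_norm_nonneg:
  assumes "a \<le> b" "continuous_on {a..b} h"
  shows "Lp_norm p a b h \<ge> 0"
proof (cases "p = \<infinity>")
  case True
  then show ?thesis
    using abs_le_Lp_norm_infinity[OF assms(2), of a] assms(1) by (auto intro: order_trans)
qed (simp add: Lp_norm_def)

lemma Lp_norm_uminus: "Lp_norm p a b (\<lambda>x. - h x) = Lp_norm p a b h"
  by (simp add: Lp_norm_def)

lemma integral_abs_power_le_Lp_norm:
  fixes p :: ereal and k :: nat
  assumes ab: "a < b" and k: "1 \<le> k" "ereal (real k) \<le> p"
  obtains C where "C \<ge> 0"
    "\<And>h. continuous_on {a..b} h \<Longrightarrow> integral {a..b} (\<lambda>x. \<bar>h x\<bar> ^ k) \<le> C * Lp_norm p a b h ^ k"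
proof (cases "p = \<infinity>")
  case True
  have "integral {a..b} (\<lambda>x. \<bar>h x\<bar> ^ k) \<le> (b - a) * Lp_norm p a b h ^ k"
    if h: "continuous_on {a..b} h" for h
  proof -
    have "integral {a..b} (\<lambda>x. \<bar>h x\<bar> ^ k) \<le> integral {a..b} (\<lambda>x. Lp_norm p a b h ^ k)"
      using abs_le_Lp_norm_infinity[OF h] True
      by (intro integral_le integrable_continuous_interval continuous_intros h power_mono) auto
    then show ?thesis using ab by simp
  qed
  with ab show ?thesis by (intro that[of "b - a"]) auto
next
  case False
  with k obtain r where r: "p = ereal r" "r \<ge> real k"
    by (cases p) auto
  define q where "q = r / real k"
  have q: "q \<ge> 1" unfolding q_def using r k by simp
  have "integral {a..b} (\<lambda>x. \<bar>h x\<bar> ^ k) \<le> (b - a) powr (1 - 1/q) * Lp_norm p a b h ^ k"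
    if h: "continuous_on {a..b} h" for h
  proof -
    have powr_k: "y ^ k = y powr real k" if "y \<ge> 0" for y :: real
      using that k by (cases "y = 0") (auto simp: powr_realpow)
    have "(\<bar>h x\<bar> ^ k) powr q = \<bar>h x\<bar> powr r" for x
      using k r unfolding q_def by (simp add: powr_k powr_powr)
    moreover have "(integral {a..b} (\<lambda>x. \<bar>h x\<bar> powr r)) powr (1/q) = Lp_norm p a b h ^ k"
      unfolding Lp_norm_def q_def using r k by (simp add: powr_k powr_powr)
    ultimately show ?thesis
      using integral_le_powr_mean[OF ab q, of "\<lambda>x. \<bar>h x\<bar> ^ k"] h
      by (simp add: continuous_intros)
  qed
  then show ?thesis by (intro that[of "(b - a) powr (1 - 1/q)"]) auto
qed

lemma integral_rescale_centered:
  fixes g :: "real \<Rightarrow> real"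
  assumes g: "continuous_on {-1..1} g" "\<And>t. 1 \<le> \<bar>t\<bar> \<Longrightarrow> g t = 0"
    and s: "0 < s" "s \<le> (b - a) / 2"
  shows "integral {a..b} (\<lambda>x. g ((x - (a + b) / 2) / s)) = s * integral {-1..1} g"
proof -
  define m where "m = (a + b) / 2"
  have "(g has_integral integral {-1..1} g) (cbox (-1) 1)"
    using integrable_continuous_interval[OF g(1)] by (simp add: cbox_interval integrable_integral)
  from has_integral_affinity'[OF this, of "1/s" "- m / s"] s
  have "((\<lambda>x. g ((x - m) / s)) has_integral s * integral {-1..1} g)
      {(m * s - s * s) / s..(m * s + s * s) / s}"
    by (simp add: cbox_interval field_simps)
  moreover have "(m * s - s * s) / s = m - s" "(m * s + s * s) / s = m + s"
    using s by (simp_all add: field_simps)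
  ultimately have "((\<lambda>x. g ((x - m) / s)) has_integral s * integral {-1..1} g) {m - s..m + s}"
    by simp
  then have "((\<lambda>x. g ((x - m) / s)) has_integral s * integral {-1..1} g) {a..b}"
  proof (rule has_integral_on_superset)
    show "g ((x - m) / s) = 0" if "x \<notin> {m - s..m + s}" for x
      using that s by (intro g(2)) (auto simp: abs_if field_simps)
    show "{m - s..m + s} \<subseteq> {a..b}"
      unfolding m_def using s by (auto simp: field_simps)
  qed
  then show ?thesis
    unfolding m_def by (rule integral_unique)
qed

definition tent :: "real \<Rightarrow> real" where
  "tent t = max 0 (1 - \<bar>t\<bar>)"

lemma continuous_on_tent [continuous_intros]: "continuous_on S tent"
  unfolding tent_def by (intro continuous_intros)

lemma tent_nonneg: "tent t \<ge> 0"
  by (simp add: tent_def)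

lemma tent_eq_0: "1 \<le> \<bar>t\<bar> \<Longrightarrow> tent t = 0"
  by (simp add: tent_def)

lemma integral_tent_power_4_pos: "integral {-1..1} (\<lambda>t. tent t ^ 4) > 0"
proof -
  have "integral {-1/2..1/2::real} (\<lambda>t. (1/2::real) ^ 4) \<le> integral {-1/2..1/2::real} (\<lambda>t. tent t ^ 4)"
    by (intro integral_le integrable_continuous_interval continuous_intros power_mono)
      (auto simp: tent_def)
  also have "\<dots> \<le> integral {-1..1} (\<lambda>t. tent t ^ 4)"
    by (intro integral_subset_le integrable_continuous_interval continuous_intros) auto
  finally have "(1/2) ^ 4 \<le> integral {-1..1} (\<lambda>t. tent t ^ 4)"
    by simp
  then show ?thesis
    by (rule less_le_trans[rotated]) simp
qed

definition bump :: "real \<Rightarrow> real \<Rightarrow> real \<Rightarrow> real \<Rightarrow> real \<Rightarrow> real" where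
  "bump a b c s x = c * tent ((x - (a + b) / 2) / s)"

lemma bump_in_C0:
  assumes "0 < s" "s \<le> (b - a) / 2"
  shows "bump a b c s \<in> C0 a b"
proof -
  have "bump a b c s x = 0" if "x \<notin> {a<..<b}" for x
  proof -
    have "s \<le> \<bar>x - (a + b) / 2\<bar>"
      using that assms by (auto simp: abs_if field_simps)
    with assms show ?thesis
      unfolding bump_def by (simp add: tent_eq_0)
  qed
  moreover have "continuous_on {a..b} (bump a b c s)"
    unfolding bump_def using assms
    by (intro continuous_intros continuous_on_compose2[OF continuous_on_tent]) auto
  ultimately show ?thesis
    unfolding C0_def by auto
qed

lemma integral_bump_power:
  assumes "0 < s" "s \<le> (b - a) / 2" "k > 0"
  shows "integral {a..b} (\<lambda>x. bump a b c s x ^ k) = c ^ k * s * integral {-1..1} (\<lambda>t. tent t ^ k)"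
  unfolding bump_def power_mult_distrib integral_mult_right
  using assms by (subst integral_rescale_centered) (auto intro!: continuous_intros simp: tent_eq_0)

lemma Lp_norm_bump:
  assumes "0 < s" "s \<le> (b - a) / 2" "c > 0" "r > 0"
  shows "Lp_norm (ereal r) a b (bump a b c s)
    = c * s powr (1/r) * integral {-1..1} (\<lambda>t. tent t powr r) powr (1/r)"
proof -
  have "\<bar>bump a b c s x\<bar> powr r = c powr r * tent ((x - (a + b) / 2) / s) powr r" for x
    unfolding bump_def using assms tent_nonneg by (simp add: abs_mult powr_mult)
  moreover have "integral {a..b} (\<lambda>x. tent ((x - (a + b) / 2) / s) powr r)
      = s * integral {-1..1} (\<lambda>t. tent t powr r)"
    using assms
    by (intro integral_rescale_centered[where g = "\<lambda>t. tent t powr r"] continuous_on_powr')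
      (auto intro: continuous_intros tent_nonneg simp: tent_eq_0)
  ultimately have "integral {a..b} (\<lambda>x. \<bar>bump a b c s x\<bar> powr r)
      = c powr r * (s * integral {-1..1} (\<lambda>t. tent t powr r))"
    by simp
  then show ?thesis
    unfolding Lp_norm_def using assms
    by (simp add: powr_mult powr_powr integral_nonneg tent_nonneg)
qed

lemma frechet_differentiable_symmetric_difference:
  assumes "frechet_differentiable X N K v" "\<epsilon> > 0"
  obtains \<delta> where "\<delta> > 0"
    "\<And>h. h \<in> X \<Longrightarrow> (\<lambda>x. - h x) \<in> X \<Longrightarrow> N (\<lambda>x. - h x) = N h \<Longrightarrow> N h < \<delta> \<Longrightarrow>
      \<bar>K (\<lambda>x. v x + h x) + K (\<lambda>x. v x + - h x) - 2 * K v\<bar> \<le> 2 * \<epsilon> * N h"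
proof -
  obtain L \<delta> where L: "bdd_linear_fun X N L" and \<delta>: "\<delta> > 0"
    and approx: "\<And>h. h \<in> X \<Longrightarrow> N h < \<delta> \<Longrightarrow> \<bar>K (\<lambda>x. v x + h x) - K v - L h\<bar> \<le> \<epsilon> * N h"
    using assms unfolding frechet_differentiable_def by meson
  have "\<bar>K (\<lambda>x. v x + h x) + K (\<lambda>x. v x + - h x) - 2 * K v\<bar> \<le> 2 * \<epsilon> * N h"
    if h: "h \<in> X" "(\<lambda>x. - h x) \<in> X" "N (\<lambda>x. - h x) = N h" "N h < \<delta>" for h
  proof -
    have "L (\<lambda>x. (-1) * h x) = (-1) * L h"
      using L h(1) unfolding bdd_linear_fun_def by blast
    then show ?thesis
      using approx[OF h(1,4)] approx[OF h(2)] h(3,4) by (simp add: abs_le_iff)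
  qed
  with \<delta> that show ?thesis by blast
qed

lemma powr_tendsto_0_at_right:
  fixes e :: real
  assumes "e > 0"
  shows "((\<lambda>s. s powr e) \<longlongrightarrow> 0) (at_right 0)"
  using assms by (intro tendsto_zero_powrI tendsto_ident_at tendsto_const)
    (auto intro: eventually_mono[OF eventually_at_right_less])

lemma scaling_eventually:
  fixes \<alpha> \<rho> A B E :: real
  assumes "0 < \<alpha>" "\<alpha> < \<rho>" "1 - \<rho> < 3 * \<alpha>" "A > 0"
  shows "((\<lambda>s. s powr (-\<alpha>) * s powr \<rho>) \<longlongrightarrow> 0) (at_right 0)"
    and "\<forall>\<^sub>F s in at_right 0. E * (s powr (-\<alpha>) * s powr \<rho>)
            < A * (s powr (-\<alpha>)) ^ 4 * s - B * (s powr (-\<alpha>)) ^ 2 * s"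
proof -
  show "((\<lambda>s. s powr (-\<alpha>) * s powr \<rho>) \<longlongrightarrow> 0) (at_right 0)"
    using powr_tendsto_0_at_right[of "\<rho> - \<alpha>"] assms by (simp add: powr_add[symmetric])
next
  define \<gamma> where "\<gamma> = 3 * \<alpha> + \<rho> - 1"
  have "((\<lambda>s. A - B * s powr (2 * \<alpha>)) \<longlongrightarrow> A - B * 0) (at_right 0)"
    using assms by (intro tendsto_intros powr_tendsto_0_at_right) auto
  moreover have "filterlim (\<lambda>s. inverse (s powr \<gamma>)) at_top (at_right 0)"
    using assms unfolding \<gamma>_def
    by (intro filterlim_inverse_at_top powr_tendsto_0_at_right)
      (auto intro: eventually_mono[OF eventually_at_right_less])
  ultimately have "filterlim (\<lambda>s. (A - B * s powr (2 * \<alpha>)) * inverse (s powr \<gamma>)) at_top (at_right 0)"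
    using assms(4) by (intro filterlim_tendsto_pos_mult_at_top[where c = A]) auto
  then have "\<forall>\<^sub>F s in at_right 0. E < (A - B * s powr (2 * \<alpha>)) * inverse (s powr \<gamma>)"
    by (simp add: filterlim_at_top_dense)
  moreover have "\<forall>\<^sub>F s in at_right 0. (0::real) < s"
    by (simp add: eventually_at_right_less)
  ultimately show "\<forall>\<^sub>F s in at_right 0. E * (s powr (-\<alpha>) * s powr \<rho>)
            < A * (s powr (-\<alpha>)) ^ 4 * s - B * (s powr (-\<alpha>)) ^ 2 * s"
  proof eventually_elim
    case (elim s)
    have "A * (s powr (-\<alpha>)) ^ 4 * s - B * (s powr (-\<alpha>)) ^ 2 * s
        = (s powr (-\<alpha>) * s powr \<rho>) * ((A - B * s powr (2 * \<alpha>)) * inverse (s powr \<gamma>))"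
      using elim(2) unfolding \<gamma>_def
      by (simp add: powr_power powr_minus[symmetric] powr_add[symmetric] powr_mult_base algebra_simps)
    with elim show ?case
      by (simp add: mult_strict_left_mono)
  qed
qed

lemma C0_continuous_on: "h \<in> C0 a b \<Longrightarrow> continuous_on {a..b} h"
  by (simp add: C0_def)

lemma C0_uminus: "h \<in> C0 a b \<Longrightarrow> (\<lambda>x. - h x) \<in> C0 a b"
  by (auto simp: C0_def intro: continuous_intros)

lemma abs_polynomial_2_4_le:
  fixes c\<^sub>2 c\<^sub>3 c\<^sub>4 M y :: real
  assumes "\<bar>c\<^sub>2\<bar> + \<bar>c\<^sub>3\<bar> + \<bar>c\<^sub>4\<bar> \<le> M"
  shows "\<bar>c\<^sub>2 * y^2 + c\<^sub>3 * y^3 + c\<^sub>4 * y^4\<bar> \<le> M * (\<bar>y\<bar>^2 + \<bar>y\<bar>^3 + \<bar>y\<bar>^4)"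
proof -
  have "\<bar>c\<^sub>2 * y^2 + c\<^sub>3 * y^3 + c\<^sub>4 * y^4\<bar> \<le> \<bar>c\<^sub>2\<bar> * \<bar>y\<bar>^2 + \<bar>c\<^sub>3\<bar> * \<bar>y\<bar>^3 + \<bar>c\<^sub>4\<bar> * \<bar>y\<bar>^4"
    unfolding abs_mult[symmetric] power_abs[symmetric] by linarith
  also have "\<dots> \<le> M * \<bar>y\<bar>^2 + M * \<bar>y\<bar>^3 + M * \<bar>y\<bar>^4"
    using assms by (intro add_mono mult_right_mono) auto
  finally show ?thesis
    by (simp add: algebra_simps)
qed

locale double_well_energy =
  fixes a b lam :: real and \<theta> F :: "real \<Rightarrow> real"
  assumes a_less_b: "a < b"
    and continuous_\<theta>: "continuous_on {a..b} \<theta>"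
    and continuous_F: "continuous_on {a..b} F"
begin

definition energy :: "(real \<Rightarrow> real) \<Rightarrow> real" where
  "energy v = integral {a..b} (\<lambda>x. \<theta> x * (Hfun lam (v x) - F x * v x))"

definition gradient :: "(real \<Rightarrow> real) \<Rightarrow> real \<Rightarrow> real" where
  "gradient v x = \<theta> x * ((1/2 * v x ^ 2 - lam) * v x - F x)"

definition first_variation :: "(real \<Rightarrow> real) \<Rightarrow> (real \<Rightarrow> real) \<Rightarrow> real" where
  "first_variation v h = integral {a..b} (\<lambda>x. gradient v x * h x)"

lemma energy_expansion:
  assumes v: "continuous_on {a..b} v" and h: "continuous_on {a..b} h"
  shows "energy (\<lambda>x. v x + h x) - energy v - first_variation v h
    = integral {a..b} (\<lambda>x. \<theta> x * ((3/4 * v x^2 - lam/2) * h x^2 + v x / 2 * h x^3 + h x^4 / 8))"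
proof -
  have "((\<lambda>x. \<theta> x * (Hfun lam (v x + h x) - F x * (v x + h x))
          - \<theta> x * (Hfun lam (v x) - F x * v x) - gradient v x * h x)
      has_integral energy (\<lambda>x. v x + h x) - energy v - first_variation v h) {a..b}"
    unfolding energy_def first_variation_def gradient_def Hfun_def
    by (intro has_integral_diff integrable_integral integrable_continuous_interval continuous_intros
        continuous_\<theta> continuous_F v h)
  then have "energy (\<lambda>x. v x + h x) - energy v - first_variation v h
      = integral {a..b} (\<lambda>x. \<theta> x * (Hfun lam (v x + h x) - F x * (v x + h x))
          - \<theta> x * (Hfun lam (v x) - F x * v x) - gradient v x * h x)"
    by (rule integral_unique[symmetric])
  also have "\<dots> = integral {a..b} (\<lambda>x. \<theta> x * ((3/4 * v x^2 - lam/2) * h x^2 + v x / 2 * h x^3 + h x^4 / 8))"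
    by (rule integral_cong)
      (simp add: gradient_def Hfun_def field_simps power2_eq_square power3_eq_cube power4_eq_xxxx)
  finally show ?thesis .
qed

lemma energy_symmetric_difference:
  assumes v: "continuous_on {a..b} v" and h: "continuous_on {a..b} h"
  shows "energy (\<lambda>x. v x + h x) + energy (\<lambda>x. v x + - h x) - 2 * energy v
    = integral {a..b} (\<lambda>x. \<theta> x * ((3/2 * v x^2 - lam) * h x^2 + h x^4 / 4))"
proof -
  have "((\<lambda>x. \<theta> x * (Hfun lam (v x + h x) - F x * (v x + h x))
          + \<theta> x * (Hfun lam (v x + - h x) - F x * (v x + - h x))
          - 2 * (\<theta> x * (Hfun lam (v x) - F x * v x)))
      has_integral energy (\<lambda>x. v x + h x) + energy (\<lambda>x. v x + - h x) - 2 * energy v) {a..b}"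
    unfolding energy_def Hfun_def
    by (intro has_integral_diff has_integral_add has_integral_mult_right integrable_integral
        integrable_continuous_interval continuous_intros continuous_\<theta> continuous_F v h)
  then have "energy (\<lambda>x. v x + h x) + energy (\<lambda>x. v x + - h x) - 2 * energy v
      = integral {a..b} (\<lambda>x. \<theta> x * (Hfun lam (v x + h x) - F x * (v x + h x))
          + \<theta> x * (Hfun lam (v x + - h x) - F x * (v x + - h x))
          - 2 * (\<theta> x * (Hfun lam (v x) - F x * v x)))"
    by (rule integral_unique[symmetric])
  also have "\<dots> = integral {a..b} (\<lambda>x. \<theta> x * ((3/2 * v x^2 - lam) * h x^2 + h x^4 / 4))"
    by (rule integral_cong) (simp add: Hfun_def field_simps power2_eq_square power4_eq_xxxx)
  finally show ?thesis .
qed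

lemma energy_symmetric_difference_lower_bound:
  assumes v: "continuous_on {a..b} v" and h: "continuous_on {a..b} h"
    and \<theta>_ge: "\<forall>x\<in>{a..b}. tm \<le> \<theta> x"
    and M: "\<And>x. x \<in> {a..b} \<Longrightarrow> \<bar>\<theta> x * (3/2 * v x^2 - lam)\<bar> \<le> M"
  shows "tm/4 * integral {a..b} (\<lambda>x. h x^4) - M * integral {a..b} (\<lambda>x. h x^2)
    \<le> energy (\<lambda>x. v x + h x) + energy (\<lambda>x. v x + - h x) - 2 * energy v"
proof -
  have "tm/4 * h x^4 - M * h x^2 \<le> \<theta> x * ((3/2 * v x^2 - lam) * h x^2 + h x^4 / 4)"
    if x: "x \<in> {a..b}" for x
  proof -
    have "- M \<le> \<theta> x * (3/2 * v x^2 - lam)"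
      using M[OF x] unfolding abs_le_iff by linarith
    then have "- M * h x^2 \<le> \<theta> x * (3/2 * v x^2 - lam) * h x^2"
      by (intro mult_right_mono) auto
    moreover have "tm/4 * h x^4 \<le> \<theta> x * h x^4 / 4"
      using \<theta>_ge x by (auto intro: mult_right_mono)
    ultimately show ?thesis
      by (simp add: algebra_simps)
  qed
  then have "integral {a..b} (\<lambda>x. tm/4 * h x^4 - M * h x^2)
      \<le> integral {a..b} (\<lambda>x. \<theta> x * ((3/2 * v x^2 - lam) * h x^2 + h x^4 / 4))"
    by (intro integral_le integrable_continuous_interval continuous_intros continuous_\<theta> v h) auto
  then show ?thesis
    using energy_symmetric_difference[OF v h]
    by (simp add: integral_diff integrable_continuous_interval continuous_intros h)
qed

lemma energy_remainder_bound:
  assumes v: "continuous_on {a..b} v"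
  obtains M where "M \<ge> 0" "\<And>h. continuous_on {a..b} h \<Longrightarrow>
    \<bar>energy (\<lambda>x. v x + h x) - energy v - first_variation v h\<bar>
      \<le> M * (integral {a..b} (\<lambda>x. \<bar>h x\<bar>^2) + integral {a..b} (\<lambda>x. \<bar>h x\<bar>^3)
              + integral {a..b} (\<lambda>x. \<bar>h x\<bar>^4))"
proof -
  have "continuous_on {a..b}
      (\<lambda>x. \<bar>\<theta> x * (3/4 * v x^2 - lam/2)\<bar> + \<bar>\<theta> x * v x / 2\<bar> + \<bar>\<theta> x / 8\<bar>)"
    by (intro continuous_intros continuous_\<theta> v) auto
  then obtain M where M: "M \<ge> 0" and bound: "\<And>x. x \<in> {a..b} \<Longrightarrow>
      norm (\<bar>\<theta> x * (3/4 * v x^2 - lam/2)\<bar> + \<bar>\<theta> x * v x / 2\<bar> + \<bar>\<theta> x / 8\<bar>) \<le> M"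
    using continuous_on_compact_bound[OF compact_Icc] by blast
  have "\<bar>energy (\<lambda>x. v x + h x) - energy v - first_variation v h\<bar>
      \<le> M * (integral {a..b} (\<lambda>x. \<bar>h x\<bar>^2) + integral {a..b} (\<lambda>x. \<bar>h x\<bar>^3)
              + integral {a..b} (\<lambda>x. \<bar>h x\<bar>^4))"
    if h: "continuous_on {a..b} h" for h
  proof -
    have pointwise: "\<bar>\<theta> x * ((3/4 * v x^2 - lam/2) * h x^2 + v x / 2 * h x^3 + h x^4 / 8)\<bar>
        \<le> M * (\<bar>h x\<bar>^2 + \<bar>h x\<bar>^3 + \<bar>h x\<bar>^4)" if x: "x \<in> {a..b}" for x
      using abs_polynomial_2_4_le[of "\<theta> x * (3/4 * v x^2 - lam/2)" "\<theta> x * v x / 2" "\<theta> x / 8" M "h x"]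
        bound[OF x] by (simp add: algebra_simps)
    have "\<bar>integral {a..b} (\<lambda>x. \<theta> x * ((3/4 * v x^2 - lam/2) * h x^2 + v x / 2 * h x^3 + h x^4 / 8))\<bar>
        \<le> integral {a..b} (\<lambda>x. M * (\<bar>h x\<bar>^2 + \<bar>h x\<bar>^3 + \<bar>h x\<bar>^4))"
      unfolding real_norm_def[symmetric]
      by (rule integral_norm_bound_integral[OF _ _ pointwise[folded real_norm_def]])
        (auto intro!: integrable_continuous_interval continuous_intros continuous_\<theta> v h)
    also have "\<dots> = M * (integral {a..b} (\<lambda>x. \<bar>h x\<bar>^2) + integral {a..b} (\<lambda>x. \<bar>h x\<bar>^3)
              + integral {a..b} (\<lambda>x. \<bar>h x\<bar>^4))"
      by (simp add: integral_add integrable_continuous_interval continuous_intros h)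
    finally show ?thesis
      using energy_expansion[OF v h] by simp
  qed
  with M that show ?thesis by blast
qed

lemma first_variation_bdd_linear:
  assumes v: "continuous_on {a..b} v" and p: "1 \<le> p"
  shows "bdd_linear_fun (C0 a b) (Lp_norm p a b) (first_variation v)"
proof -
  have grad: "continuous_on {a..b} (gradient v)"
    unfolding gradient_def by (intro continuous_intros continuous_\<theta> continuous_F v)
  obtain M where M: "\<And>x. x \<in> {a..b} \<Longrightarrow> norm (gradient v x) \<le> M"
    using continuous_on_compact_bound[OF compact_Icc grad] by blast
  obtain C where C: "\<And>h. continuous_on {a..b} h \<Longrightarrow>
      integral {a..b} (\<lambda>x. \<bar>h x\<bar> ^ 1) \<le> C * Lp_norm p a b h ^ 1"
    using integral_abs_power_le_Lp_norm[OF a_less_b, of 1 p] p by (auto simp: one_ereal_def)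
  have "\<bar>first_variation v h\<bar> \<le> (M * C) * Lp_norm p a b h" if h: "h \<in> C0 a b" for h
  proof -
    note h = C0_continuous_on[OF h]
    have "\<bar>first_variation v h\<bar> \<le> integral {a..b} (\<lambda>x. M * \<bar>h x\<bar>)"
      unfolding first_variation_def real_norm_def[symmetric]
      using M by (intro integral_norm_bound_integral integrable_continuous_interval continuous_intros grad h)
        (auto simp: abs_mult intro: mult_right_mono)
    also have "\<dots> \<le> M * (C * Lp_norm p a b h)"
      using C[OF h] M[of a] a_less_b by (auto intro: mult_left_mono order_trans[OF norm_ge_zero])
    finally show ?thesis by simp
  qed
  then show ?thesis
    unfolding bdd_linear_fun_def first_variation_def
    by (auto simp: distrib_left integral_add integrable_continuous_interval continuous_intros grad
        C0_continuous_on mult.left_commute)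
qed

lemma energy_gateaux_differentiable:
  assumes v: "continuous_on {a..b} v" and p: "1 \<le> p"
  shows "gateaux_differentiable (C0 a b) (Lp_norm p a b) energy v"
  unfolding gateaux_differentiable_def
proof (intro exI conjI ballI)
  show "bdd_linear_fun (C0 a b) (Lp_norm p a b) (first_variation v)"
    using first_variation_bdd_linear[OF v p] .
  fix h assume "h \<in> C0 a b"
  note h = C0_continuous_on[OF this]
  obtain M where remainder: "\<And>h. continuous_on {a..b} h \<Longrightarrow>
    \<bar>energy (\<lambda>x. v x + h x) - energy v - first_variation v h\<bar>
      \<le> M * (integral {a..b} (\<lambda>x. \<bar>h x\<bar>^2) + integral {a..b} (\<lambda>x. \<bar>h x\<bar>^3)
              + integral {a..b} (\<lambda>x. \<bar>h x\<bar>^4))"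
    using energy_remainder_bound[OF v] by blast
  define I where "I k = integral {a..b} (\<lambda>x. \<bar>h x\<bar> ^ k)" for k :: nat
  have "\<bar>(energy (\<lambda>x. v x + t * h x) - energy v) / t - first_variation v h\<bar>
      \<le> M * (\<bar>t\<bar> * I 2 + t^2 * I 3 + \<bar>t\<bar>^3 * I 4)" if t: "t \<noteq> 0" for t
  proof -
    have linear: "first_variation v (\<lambda>x. t * h x) = t * first_variation v h"
      unfolding first_variation_def by (simp add: mult.left_commute)
    have moments: "integral {a..b} (\<lambda>x. \<bar>t * h x\<bar> ^ k) = \<bar>t\<bar> ^ k * I k" for k
      unfolding I_def abs_mult power_mult_distrib by simp
    have "\<bar>energy (\<lambda>x. v x + t * h x) - energy v - t * first_variation v h\<bar>
        \<le> M * (\<bar>t\<bar>^2 * I 2 + \<bar>t\<bar>^3 * I 3 + \<bar>t\<bar>^4 * I 4)"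
      using remainder[of "\<lambda>x. t * h x", unfolded moments linear] h by (simp add: continuous_intros)
    also have "\<dots> = \<bar>t\<bar> * (M * (\<bar>t\<bar> * I 2 + t^2 * I 3 + \<bar>t\<bar>^3 * I 4))"
      by (simp add: algebra_simps power2_eq_square power3_eq_cube power4_eq_xxxx)
    finally have "\<bar>energy (\<lambda>x. v x + t * h x) - energy v - t * first_variation v h\<bar> / \<bar>t\<bar>
        \<le> M * (\<bar>t\<bar> * I 2 + t^2 * I 3 + \<bar>t\<bar>^3 * I 4)"
      using t by (simp add: pos_divide_le_eq mult.commute)
    moreover have "(energy (\<lambda>x. v x + t * h x) - energy v) / t - first_variation v h
        = (energy (\<lambda>x. v x + t * h x) - energy v - t * first_variation v h) / t"
      using t by (simp add: diff_divide_distrib)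
    ultimately show ?thesis
      by (simp add: abs_divide)
  qed
  then have "\<forall>\<^sub>F t in at 0. norm ((energy (\<lambda>x. v x + t * h x) - energy v) / t - first_variation v h)
      \<le> M * (\<bar>t\<bar> * I 2 + t^2 * I 3 + \<bar>t\<bar>^3 * I 4)"
    by (auto simp: eventually_at_filter)
  moreover have "((\<lambda>t. M * (\<bar>t\<bar> * I 2 + t^2 * I 3 + \<bar>t\<bar>^3 * I 4)) \<longlongrightarrow> 0) (at 0)"
    by (rule tendsto_eq_intros refl | simp)+
  ultimately show "((\<lambda>t. (energy (\<lambda>x. v x + t * h x) - energy v) / t) \<longlongrightarrow> first_variation v h) (at 0)"
    by (subst Lim_null) (rule Lim_null_comparison)
qed

lemma energy_frechet_differentiable:
  assumes v: "continuous_on {a..b} v" and p: "4 \<le> p"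
  shows "frechet_differentiable (C0 a b) (Lp_norm p a b) energy v"
  unfolding frechet_differentiable_def
proof (intro exI[of _ "first_variation v"] conjI allI impI)
  show "bdd_linear_fun (C0 a b) (Lp_norm p a b) (first_variation v)"
    using first_variation_bdd_linear[OF v] p by (simp add: order_trans[of 1 4 p])
  have k_le_p: "ereal (real k) \<le> p" if "k \<le> 4" for k :: nat
    using p that by (cases p) auto
  obtain C\<^sub>2 where C\<^sub>2: "C\<^sub>2 \<ge> 0" "\<And>h. continuous_on {a..b} h \<Longrightarrow>
      integral {a..b} (\<lambda>x. \<bar>h x\<bar>^2) \<le> C\<^sub>2 * Lp_norm p a b h ^ 2"
    using integral_abs_power_le_Lp_norm[OF a_less_b _ k_le_p, of 2] by auto
  obtain C\<^sub>3 where C\<^sub>3: "C\<^sub>3 \<ge> 0" "\<And>h. continuous_on {a..b} h \<Longrightarrow>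
      integral {a..b} (\<lambda>x. \<bar>h x\<bar>^3) \<le> C\<^sub>3 * Lp_norm p a b h ^ 3"
    using integral_abs_power_le_Lp_norm[OF a_less_b _ k_le_p, of 3] by auto
  obtain C\<^sub>4 where C\<^sub>4: "C\<^sub>4 \<ge> 0" "\<And>h. continuous_on {a..b} h \<Longrightarrow>
      integral {a..b} (\<lambda>x. \<bar>h x\<bar>^4) \<le> C\<^sub>4 * Lp_norm p a b h ^ 4"
    using integral_abs_power_le_Lp_norm[OF a_less_b _ k_le_p, of 4] by auto
  obtain M where M: "M \<ge> 0" and remainder: "\<And>h. continuous_on {a..b} h \<Longrightarrow>
    \<bar>energy (\<lambda>x. v x + h x) - energy v - first_variation v h\<bar>
      \<le> M * (integral {a..b} (\<lambda>x. \<bar>h x\<bar>^2) + integral {a..b} (\<lambda>x. \<bar>h x\<bar>^3)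
              + integral {a..b} (\<lambda>x. \<bar>h x\<bar>^4))"
    using energy_remainder_bound[OF v] by blast
  define S where "S = M * (C\<^sub>2 + C\<^sub>3 + C\<^sub>4)"
  have S: "S \<ge> 0"
    unfolding S_def using M C\<^sub>2 C\<^sub>3 C\<^sub>4 by simp
  fix \<epsilon> :: real assume \<epsilon>: "\<epsilon> > 0"
  show "\<exists>\<delta>>0. \<forall>h\<in>C0 a b. Lp_norm p a b h < \<delta> \<longrightarrow>
      \<bar>energy (\<lambda>x. v x + h x) - energy v - first_variation v h\<bar> \<le> \<epsilon> * Lp_norm p a b h"
  proof (intro exI[of _ "min 1 (\<epsilon> / (S + 1))"] conjI ballI impI)
    show "min 1 (\<epsilon> / (S + 1)) > 0"
      using \<epsilon> S by simp
    fix h assume "h \<in> C0 a b" and small: "Lp_norm p a b h < min 1 (\<epsilon> / (S + 1))"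
    note h = C0_continuous_on[OF this(1)]
    define n where "n = Lp_norm p a b h"
    have n: "0 \<le> n" "n \<le> 1"
      using Lp_norm_nonneg[OF less_imp_le[OF a_less_b] h] small unfolding n_def by auto
    have "S * n \<le> (S + 1) * (\<epsilon> / (S + 1))"
      using small S n unfolding n_def by (intro mult_mono) auto
    then have Sn: "S * n \<le> \<epsilon>"
      using S by simp
    have "\<bar>energy (\<lambda>x. v x + h x) - energy v - first_variation v h\<bar>
        \<le> M * (integral {a..b} (\<lambda>x. \<bar>h x\<bar>^2) + integral {a..b} (\<lambda>x. \<bar>h x\<bar>^3)
              + integral {a..b} (\<lambda>x. \<bar>h x\<bar>^4))"
      by (rule remainder[OF h])
    also have "\<dots> \<le> M * (C\<^sub>2 * n^2 + C\<^sub>3 * n^3 + C\<^sub>4 * n^4)"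
      using C\<^sub>2(2)[OF h] C\<^sub>3(2)[OF h] C\<^sub>4(2)[OF h] M unfolding n_def
      by (intro mult_left_mono add_mono) auto
    also have "\<dots> \<le> M * (C\<^sub>2 * n^2 + C\<^sub>3 * n^2 + C\<^sub>4 * n^2)"
      using n C\<^sub>2 C\<^sub>3 C\<^sub>4 M by (intro mult_left_mono add_mono power_decreasing) auto
    also have "\<dots> = (S * n) * n"
      unfolding S_def by (simp add: algebra_simps power2_eq_square)
    also have "\<dots> \<le> \<epsilon> * n"
      using n Sn by (intro mult_right_mono) auto
    finally show "\<bar>energy (\<lambda>x. v x + h x) - energy v - first_variation v h\<bar> \<le> \<epsilon> * Lp_norm p a b h"
      unfolding n_def .
  qed
qed

lemma energy_not_frechet_differentiable:
  assumes v: "continuous_on {a..b} v" and \<theta>_ge: "\<forall>x\<in>{a..b}. tm \<le> \<theta> x" "tm > 0"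
    and r: "1 \<le> r" "r < 4"
  shows "\<not> frechet_differentiable (C0 a b) (Lp_norm (ereal r) a b) energy v"
proof
  assume "frechet_differentiable (C0 a b) (Lp_norm (ereal r) a b) energy v"
  then obtain \<delta> where \<delta>: "\<delta> > 0" and symmetric_difference:
    "\<And>h. h \<in> C0 a b \<Longrightarrow> (\<lambda>x. - h x) \<in> C0 a b \<Longrightarrow>
      Lp_norm (ereal r) a b (\<lambda>x. - h x) = Lp_norm (ereal r) a b h \<Longrightarrow> Lp_norm (ereal r) a b h < \<delta> \<Longrightarrow>
      \<bar>energy (\<lambda>x. v x + h x) + energy (\<lambda>x. v x + - h x) - 2 * energy v\<bar>
        \<le> 2 * 1 * Lp_norm (ereal r) a b h"
    by (rule frechet_differentiable_symmetric_difference[OF _ zero_less_one]) blast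
  have "continuous_on {a..b} (\<lambda>x. \<theta> x * (3/2 * v x^2 - lam))"
    by (intro continuous_intros continuous_\<theta> v)
  then obtain M where "M \<ge> 0" and M: "\<And>x. x \<in> {a..b} \<Longrightarrow> norm (\<theta> x * (3/2 * v x^2 - lam)) \<le> M"
    by (rule continuous_on_compact_bound[OF compact_Icc]) blast
  \<comment> \<open>Any \<open>\<alpha>\<close> strictly between \<open>(r - 1) / (3 r)\<close> and \<open>1 / r\<close> works; this interval is
    nonempty exactly when \<open>r < 4\<close>.\<close>
  define \<alpha> where "\<alpha> = (r + 2) / (6 * r)"
  define J where "J = integral {-1..1} (\<lambda>t. tent t powr r) powr (1/r)"
  define A where "A = tm/4 * integral {-1..1} (\<lambda>t. tent t ^ 4)"
  define B where "B = M * integral {-1..1} (\<lambda>t. tent t ^ 2)"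
  have \<alpha>: "0 < \<alpha>" "\<alpha> < 1/r" "1 - 1/r < 3 * \<alpha>"
    unfolding \<alpha>_def using r by (auto simp: field_simps)
  have A: "A > 0"
    unfolding A_def using \<theta>_ge(2) integral_tent_power_4_pos by simp
  note vanishing = scaling_eventually(1)[OF \<alpha> A]
  note steepening = scaling_eventually(2)[OF \<alpha> A, of "2 * J" B]
  have "\<forall>\<^sub>F s in at_right 0. J * (s powr (-\<alpha>) * s powr (1/r)) < \<delta>"
    using \<delta> by (intro order_tendstoD(2)[OF tendsto_mult_right_zero[OF vanishing]]) simp
  moreover have "\<forall>\<^sub>F s in at_right 0. s < (b - a) / 2"
    using a_less_b by (intro order_tendstoD(2)[OF tendsto_ident_at]) simp
  ultimately obtain s where s: "0 < s" "s < (b - a) / 2"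
    and small: "J * (s powr (-\<alpha>) * s powr (1/r)) < \<delta>"
    and steep: "2 * J * (s powr (-\<alpha>) * s powr (1/r))
      < A * (s powr (-\<alpha>)) ^ 4 * s - B * (s powr (-\<alpha>)) ^ 2 * s"
    using eventually_happens'[OF trivial_limit_at_right_real
        eventually_conj[OF eventually_at_right_less eventually_conj[OF _ eventually_conj[OF _ steepening]]]]
    by blast
  define c where "c = s powr (-\<alpha>)"
  define h where "h = bump a b c s"
  have c: "c > 0"
    unfolding c_def using s by simp
  have h: "h \<in> C0 a b" "(\<lambda>x. - h x) \<in> C0 a b"
    unfolding h_def using s by (simp_all add: bump_in_C0 C0_uminus)
  have norm_h: "Lp_norm (ereal r) a b h = J * (c * s powr (1/r))"
    unfolding h_def J_def using s c r by (simp add: Lp_norm_bump)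
  have "integral {a..b} (\<lambda>x. h x ^ k) = c ^ k * s * integral {-1..1} (\<lambda>t. tent t ^ k)"
    if "k > 0" for k
    unfolding h_def using integral_bump_power[of s b a k c] s that by simp
  then have "A * c ^ 4 * s - B * c ^ 2 * s
      = tm/4 * integral {a..b} (\<lambda>x. h x ^ 4) - M * integral {a..b} (\<lambda>x. h x ^ 2)"
    unfolding A_def B_def by (simp add: mult_ac)
  also have "\<dots> \<le> energy (\<lambda>x. v x + h x) + energy (\<lambda>x. v x + - h x) - 2 * energy v"
    using energy_symmetric_difference_lower_bound[OF v C0_continuous_on[OF h(1)] \<theta>_ge(1) M[unfolded real_norm_def]] .
  also have "\<dots> \<le> 2 * J * (c * s powr (1/r))"
    using symmetric_difference[OF h Lp_norm_uminus] norm_h small unfolding c_def by simp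
  finally show False
    using steep unfolding c_def by linarith
qed

end

theorem proposition1:
  fixes a b lam :: real and \<theta> F :: "real \<Rightarrow> real" and p :: ereal
    and K :: "(real \<Rightarrow> real) \<Rightarrow> real"
  assumes "a < b" and "lam > 0"
    and "continuous_on {a..b} \<theta>" and "(INF x\<in>{a..b}. \<theta> x) > 0"
    and "\<exists>F'. (\<forall>x\<in>{a..b}. (F has_real_derivative F' x) (at x within {a..b}))
               \<and> continuous_on {a..b} F'"
    and "F a = 0" and "F b = 0" and "\<forall>x\<in>{a<..<b}. F x \<noteq> 0"
    and "(SUP x\<in>{a..b}. \<bar>F x\<bar>) < (2 * lam / 3) powr (3/2)"
    and "1 \<le> p"
    and "\<And>v. K v = integral {a..b} (\<lambda>x. \<theta> x * (Hfun lam (v x) - F x * v x))"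
  shows "(\<forall>v\<in>C0 a b. gateaux_differentiable (C0 a b) (Lp_norm p a b) K v) \<and>
         (\<forall>v\<in>C0 a b. frechet_differentiable (C0 a b) (Lp_norm p a b) K v \<longleftrightarrow> p \<ge> 4)"
proof -
  have "continuous_on {a..b} F"
    using assms(5) DERIV_continuous_on by blast
  then interpret double_well_energy a b lam \<theta> F
    using assms(1,3) by unfold_locales
  have K: "K = energy"
    using assms(11) by (simp add: energy_def fun_eq_iff)
  have "bdd_below (\<theta> ` {a..b})"
    by (intro bounded_imp_bdd_below compact_imp_bounded compact_continuous_image continuous_\<theta>) simp
  then have \<theta>_ge: "\<forall>x\<in>{a..b}. (INF x\<in>{a..b}. \<theta> x) \<le> \<theta> x"
    by (auto intro: cINF_lower)
  have "frechet_differentiable (C0 a b) (Lp_norm p a b) energy v \<longleftrightarrow> p \<ge> 4"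
    if v: "continuous_on {a..b} v" for v
  proof (cases "p \<ge> 4")
    case False
    with assms(10) obtain r where "p = ereal r" "1 \<le> r" "r < 4"
      by (cases p) auto
    with energy_not_frechet_differentiable[OF v \<theta>_ge assms(4)] False show ?thesis
      by simp
  qed (simp add: energy_frechet_differentiable[OF v])
  then show ?thesis
    unfolding K using energy_gateaux_differentiable assms(10) C0_continuous_on by blast
qed

end
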